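(* Let $n\in\mathbb N$ and let $(M,d)$ be a pointed metric space with $d(x,y)\in\{0,1,\dots,n\}$ for all $x,y\in M$. Let $\mu\in ba(\widetilde M)$ be positive. The following are equivalent: (i) $\|\Phi^*\mu\|=\|\mu\|$. (ii) For every $\gamma\in(0,1)$ there exist $B\subseteq\widetilde M$ and $f\in B_{\mathrm{Lip}_0(M)}$ with $\mu(B)\ge\gamma\mu(\widetilde M)$ and $f(m_{x,y})=1$ for all $(x,y)\in B$. (iii) For every $\gamma\in(0,1)$ there exists a cyclically monotonic $B\subseteq\widetilde M$ with $\mu(B)\ge\gamma\mu(\widetilde M)$.
   Context: $M$ has base point $0$; $\mathrm{Lip}_0(M)$ is the real Banach space of Lipschitz $f\colon M\to\mathbb R$ with $f(0)=0$, normed by the best Lipschitz constant, with unit ball $B_{\mathrm{Lip}_0(M)}$. $\widetilde M=\{(x,y)\in M\times M:x\ne y\}$ and $f(m_{x,y})=(f(x)-f(y))/d(x,y)$. $ba(\widetilde M)$ is the Banach space of bounded finitely additive signed measures on the power set of $\widetilde M$ with norm $|\mu|(\widetilde M)$. $\Phi f(x,y)=(f(x)-f(y))/d(x,y)$ (de Leeuw map into $\ell_\infty(\widetilde M)$) and $(\Phi^*\mu)(f)=\int_{\widetilde M}\Phi f\,d\mu$. $B\subseteq\widetilde M$ is cyclically monotonic if for every finite sequence $(x_1,y_1),\dots,(x_k,y_k)\in B$, with $y_{k+1}=y_1$, $\sum_{i=1}^k d(x_i,y_{i+1})\ge\sum_{i=1}^k d(x_i,y_i)$. *)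

theory Defs
  imports "HOL-Analysis.Analysis"
begin

definition Mt :: "('a \<times> 'a) set" where
  "Mt = {(x, y). x \<noteq> y}"

definition deLeeuw :: "('a::metric_space \<Rightarrow> real) \<Rightarrow> 'a \<times> 'a \<Rightarrow> real" where
  "deLeeuw f = (\<lambda>(x, y). (f x - f y) / dist x y)"

definition Lip0_ball :: "'a::metric_space \<Rightarrow> ('a \<Rightarrow> real) set" where
  "Lip0_ball p = {f. f p = 0 \<and> 1-lipschitz_on UNIV f}"

definition Mt_partitions :: "('a \<times> 'a) set set set" where
  "Mt_partitions = {P. finite P \<and> \<Union>P = Mt \<and> {} \<notin> P \<and> disjoint P}"

text \<open>Positive bounded finitely additive measure on the power set of M~
  (positivity and finiteness of mu(M~) give boundedness).\<close>
definition positive_ba :: "(('a \<times> 'a) set \<Rightarrow> real) \<Rightarrow> bool" where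
  "positive_ba \<mu> \<longleftrightarrow> \<mu> {} = 0 \<and> (\<forall>A. A \<subseteq> Mt \<longrightarrow> 0 \<le> \<mu> A) \<and>
     (\<forall>A B. A \<subseteq> Mt \<longrightarrow> B \<subseteq> Mt \<longrightarrow> A \<inter> B = {} \<longrightarrow> \<mu> (A \<union> B) = \<mu> A + \<mu> B)"

definition ba_norm :: "(('a \<times> 'a) set \<Rightarrow> real) \<Rightarrow> real" where
  "ba_norm \<mu> = Sup {(\<Sum>A\<in>P. \<bar>\<mu> A\<bar>) | P. P \<in> Mt_partitions}"

text \<open>Integral of a bounded function against a positive finitely additive measure
  (supremum of lower sums over finite partitions; agrees with the Dunford--Schwartz
  integral for positive mu and bounded g).\<close>
definition ba_integral :: "(('a \<times> 'a) set \<Rightarrow> real) \<Rightarrow> ('a \<times> 'a \<Rightarrow> real) \<Rightarrow> real" where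
  "ba_integral \<mu> g = Sup {(\<Sum>A\<in>P. Inf (g ` A) * \<mu> A) | P. P \<in> Mt_partitions}"

definition Phi_star_norm :: "'a::metric_space \<Rightarrow> (('a \<times> 'a) set \<Rightarrow> real) \<Rightarrow> real" where
  "Phi_star_norm p \<mu> = Sup {\<bar>ba_integral \<mu> (deLeeuw f)\<bar> | f. f \<in> Lip0_ball p}"

definition cyclically_monotonic :: "('a::metric_space \<times> 'a) set \<Rightarrow> bool" where
  "cyclically_monotonic B \<longleftrightarrow> (\<forall>ps. set ps \<subseteq> B \<longrightarrow>
     (\<Sum>i<length ps. dist (fst (ps ! i)) (snd (ps ! i)))
       \<le> (\<Sum>i<length ps. dist (fst (ps ! i)) (snd (ps ! ((i + 1) mod length ps)))))"

end

theory Submission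
  imports Defs
begin

text \<open>(ii) \<Longrightarrow> (i): the de Leeuw transform of f is 1 on B and at least -1 elsewhere, so
  integrating it against \<mu> shows that the norm of \<Phi>*\<mu> is at least 2\<mu>(B) - \<mu>(Mt).
  (i) \<Longrightarrow> (ii): a function f nearly attaining the norm has de Leeuw transform above 1 - \<eta> outside a
  set of small measure. As all distances are integers bounded by n, rounding f + j/K down to
  integers gives 1-Lipschitz functions, and for at least one shift j < K the rounded function has
  slope exactly 1 on most of that set.
  (ii) \<Longleftrightarrow> (iii): a set on which a function of the unit ball has slope 1 is cyclically monotonic
  by telescoping; conversely, Rockafellar's infimum over chains turns a cyclically monotonic set
  into such a function.\<close>

section \<open>Positive finitely additive measures on Mt\<close>

lemma positive_ba_empty: "positive_ba \<mu> \<Longrightarrow> \<mu> {} = 0"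
  by (simp add: positive_ba_def)

lemma positive_ba_nonneg: "positive_ba \<mu> \<Longrightarrow> A \<subseteq> Mt \<Longrightarrow> 0 \<le> \<mu> A"
  by (simp add: positive_ba_def)

lemma positive_ba_Un:
  "positive_ba \<mu> \<Longrightarrow> A \<subseteq> Mt \<Longrightarrow> B \<subseteq> Mt \<Longrightarrow> A \<inter> B = {} \<Longrightarrow> \<mu> (A \<union> B) = \<mu> A + \<mu> B"
  by (simp add: positive_ba_def)

lemma positive_ba_Diff:
  assumes "positive_ba \<mu>" "A \<subseteq> B" "B \<subseteq> Mt"
  shows "\<mu> (B - A) = \<mu> B - \<mu> A"
proof -
  have "\<mu> B = \<mu> (A \<union> (B - A))"
    using assms(2) by (simp add: Un_absorb1)
  also have "\<dots> = \<mu> A + \<mu> (B - A)"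
    using assms by (intro positive_ba_Un) auto
  finally show ?thesis by simp
qed

lemma positive_ba_mono: "positive_ba \<mu> \<Longrightarrow> A \<subseteq> B \<Longrightarrow> B \<subseteq> Mt \<Longrightarrow> \<mu> A \<le> \<mu> B"
  using positive_ba_Diff[of \<mu> A B] positive_ba_nonneg[of \<mu> "B - A"] by auto

lemma positive_ba_UN:
  assumes "positive_ba \<mu>" "finite I" "\<And>i. i \<in> I \<Longrightarrow> F i \<subseteq> Mt"
    and "\<And>i j. i \<in> I \<Longrightarrow> j \<in> I \<Longrightarrow> i \<noteq> j \<Longrightarrow> F i \<inter> F j = {}"
  shows "\<mu> (\<Union>i\<in>I. F i) = (\<Sum>i\<in>I. \<mu> (F i))"
  using assms(2-)
proof (induction I rule: finite_induct)
  case empty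
  then show ?case using positive_ba_empty[OF assms(1)] by simp
next
  case (insert i I)
  have "\<mu> (F i \<union> (\<Union>j\<in>I. F j)) = \<mu> (F i) + \<mu> (\<Union>j\<in>I. F j)"
    using insert by (intro positive_ba_Un[OF assms(1)]) blast+
  then show ?case using insert by simp
qed

lemma positive_ba_partition_sum:
  assumes "positive_ba \<mu>" "P \<in> Mt_partitions"
  shows "(\<Sum>A\<in>P. \<mu> A) = \<mu> Mt"
proof -
  have P: "finite P" "\<Union>P = Mt" "disjoint P"
    using assms(2) by (auto simp: Mt_partitions_def)
  have "\<mu> (\<Union>A\<in>P. A) = (\<Sum>A\<in>P. \<mu> A)"
    using P by (intro positive_ba_UN[OF assms(1)]) (auto simp: pairwise_def disjnt_def)
  then show ?thesis using P(2) by simp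
qed

lemma Mt_partitions_nonempty: "(Mt_partitions :: ('a \<times> 'a) set set set) \<noteq> {}"
proof (cases "(Mt :: ('a \<times> 'a) set) = {}")
  case True
  then have "{} \<in> (Mt_partitions :: ('a \<times> 'a) set set set)" by (auto simp: Mt_partitions_def)
  then show ?thesis by blast
next
  case False
  then have "{Mt} \<in> (Mt_partitions :: ('a \<times> 'a) set set set)" by (simp add: Mt_partitions_def)
  then show ?thesis by blast
qed

lemma ba_norm_positive_ba:
  assumes "positive_ba \<mu>"
  shows "ba_norm \<mu> = \<mu> Mt"
proof -
  have "(\<Sum>A\<in>P. \<bar>\<mu> A\<bar>) = \<mu> Mt" if "P \<in> Mt_partitions" for P
  proof -
    have "\<bar>\<mu> A\<bar> = \<mu> A" if "A \<in> P" for A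
    proof -
      have "A \<subseteq> Mt" using \<open>P \<in> Mt_partitions\<close> that by (auto simp: Mt_partitions_def)
      then show ?thesis using positive_ba_nonneg[OF assms] by simp
    qed
    then show ?thesis using positive_ba_partition_sum[OF assms that] by simp
  qed
  then have "(\<lambda>P. \<Sum>A\<in>P. \<bar>\<mu> A\<bar>) ` Mt_partitions
      = (\<lambda>_. \<mu> Mt) ` (Mt_partitions :: ('a \<times> 'a) set set set)"
    by (intro image_cong) auto
  also have "\<dots> = {\<mu> Mt}"
    using Mt_partitions_nonempty by (simp add: image_constant_conv)
  finally show ?thesis by (simp add: ba_norm_def setcompr_eq_image)
qed

definition lower_sum :: "(('a \<times> 'a) set \<Rightarrow> real) \<Rightarrow> ('a \<times> 'a \<Rightarrow> real) \<Rightarrow> ('a \<times> 'a) set set \<Rightarrow> real"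
  where "lower_sum \<mu> g P = (\<Sum>A\<in>P. Inf (g ` A) * \<mu> A)"

lemma ba_integral_lower_sum: "ba_integral \<mu> g = Sup (lower_sum \<mu> g ` Mt_partitions)"
  unfolding ba_integral_def lower_sum_def by (simp add: setcompr_eq_image)

lemma Inf_image_mult_le:
  assumes "positive_ba \<mu>" "A \<subseteq> Mt" "z \<in> A" "bdd_below (g ` A)"
  shows "Inf (g ` A) * \<mu> A \<le> g z * \<mu> A"
  using assms by (intro mult_right_mono cInf_lower positive_ba_nonneg) auto

lemma Inf_image_mult_ge:
  assumes "positive_ba \<mu>" "A \<subseteq> Mt" "\<forall>z\<in>A. c \<le> g z"
  shows "c * \<mu> A \<le> Inf (g ` A) * \<mu> A"
proof (cases "A = {}")
  case True
  then show ?thesis using positive_ba_empty[OF assms(1)] by simp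
next
  case False
  then show ?thesis
    using assms by (intro mult_right_mono cInf_greatest positive_ba_nonneg) auto
qed

lemma lower_sum_le:
  assumes pos: "positive_ba \<mu>" and P: "P \<in> Mt_partitions"
    and g: "\<forall>z\<in>Mt. \<bar>g z\<bar> \<le> 1" and "0 \<le> \<eta>"
  shows "lower_sum \<mu> g P \<le> \<mu> Mt - \<eta> * \<mu> (Mt - {z\<in>Mt. 1 - \<eta> < g z})"
proof -
  define G where "G = {z\<in>Mt. 1 - \<eta> < g z}"
  have P': "finite P" "\<Union>P = Mt" "disjoint P" "{} \<notin> P"
    using P by (auto simp: Mt_partitions_def)
  have piece: "Inf (g ` A) * \<mu> A \<le> \<mu> A - \<eta> * \<mu> (A - G)" if "A \<in> P" for A
  proof -
    have A: "A \<subseteq> Mt" "A \<noteq> {}" using that P' by auto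
    have bdd: "bdd_below (g ` A)"
      using A g by (intro bdd_belowI[of _ "-1"]) (auto simp: abs_le_iff)
    show ?thesis
    proof (cases "A \<subseteq> G")
      case True
      obtain z where "z \<in> A" using A by blast
      then have "Inf (g ` A) * \<mu> A \<le> g z * \<mu> A"
        using Inf_image_mult_le[OF pos A(1) _ bdd] by blast
      also have "\<dots> \<le> 1 * \<mu> A"
        using g \<open>z \<in> A\<close> A positive_ba_nonneg[OF pos A(1)]
        by (intro mult_right_mono) (auto simp: abs_le_iff)
      also have "\<dots> = \<mu> A - \<eta> * \<mu> (A - G)"
        using True positive_ba_empty[OF pos] by (simp add: Diff_eq_empty_iff[THEN iffD2])
      finally show ?thesis .
    next
      case False
      then obtain z where z: "z \<in> A" "z \<notin> G" by blast
      then have "g z \<le> 1 - \<eta>" using A(1) by (auto simp: G_def)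
      have "Inf (g ` A) * \<mu> A \<le> g z * \<mu> A"
        using Inf_image_mult_le[OF pos A(1) z(1) bdd] .
      also have "\<dots> \<le> (1 - \<eta>) * \<mu> A"
        using \<open>g z \<le> 1 - \<eta>\<close> positive_ba_nonneg[OF pos A(1)] by (intro mult_right_mono)
      also have "\<dots> \<le> \<mu> A - \<eta> * \<mu> (A - G)"
        using positive_ba_mono[OF pos _ A(1), of "A - G"] \<open>0 \<le> \<eta>\<close>
        by (simp add: algebra_simps mult_left_mono)
      finally show ?thesis .
    qed
  qed
  have "lower_sum \<mu> g P \<le> (\<Sum>A\<in>P. \<mu> A) - \<eta> * (\<Sum>A\<in>P. \<mu> (A - G))"
    unfolding lower_sum_def sum_distrib_left sum_subtractf[symmetric] by (intro sum_mono piece)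
  also have "(\<Sum>A\<in>P. \<mu> (A - G)) = \<mu> (\<Union>A\<in>P. A - G)"
    using P' by (intro positive_ba_UN[OF pos, symmetric]) (auto simp: pairwise_def disjnt_def)
  also have "(\<Union>A\<in>P. A - G) = Mt - G" using P'(2) by auto
  finally show ?thesis using positive_ba_partition_sum[OF pos P] by (simp add: G_def)
qed

lemma bdd_above_lower_sums:
  assumes "positive_ba \<mu>" "\<forall>z\<in>Mt. \<bar>g z\<bar> \<le> 1"
  shows "bdd_above (lower_sum \<mu> g ` Mt_partitions)"
  using lower_sum_le[OF assms(1) _ assms(2), where \<eta> = 0] by (intro bdd_aboveI[of _ "\<mu> Mt"]) auto

lemma ba_integral_le:
  assumes "positive_ba \<mu>" "\<forall>z\<in>Mt. \<bar>g z\<bar> \<le> 1" "0 \<le> \<eta>"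
  shows "ba_integral \<mu> g \<le> \<mu> Mt - \<eta> * \<mu> (Mt - {z\<in>Mt. 1 - \<eta> < g z})"
  unfolding ba_integral_lower_sum
  using Mt_partitions_nonempty lower_sum_le[OF assms(1) _ assms(2,3)] by (auto intro: cSup_least)

lemma ba_integral_ge:
  assumes pos: "positive_ba \<mu>" and g: "\<forall>z\<in>Mt. \<bar>g z\<bar> \<le> 1"
    and S: "S \<subseteq> Mt" "\<forall>z\<in>S. c \<le> g z"
  shows "c * \<mu> S - \<mu> (Mt - S) \<le> ba_integral \<mu> g"
proof -
  define P where "P = {S, Mt - S} - {{}}"
  have "\<Union>P = Mt" using S(1) by (auto simp: P_def)
  moreover have "disjoint P" by (auto simp: P_def pairwise_def disjnt_def)
  ultimately have P: "P \<in> Mt_partitions" by (simp add: Mt_partitions_def P_def)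
  have "c * \<mu> S - \<mu> (Mt - S) \<le> (\<Sum>A\<in>{S, Mt - S}. Inf (g ` A) * \<mu> A)"
  proof (cases "S = Mt - S")
    case True
    then have "S = {}" by blast
    then show ?thesis using True positive_ba_empty[OF pos] by simp
  next
    case False
    have "c * \<mu> S \<le> Inf (g ` S) * \<mu> S"
      using Inf_image_mult_ge[OF pos S] .
    moreover have "-1 * \<mu> (Mt - S) \<le> Inf (g ` (Mt - S)) * \<mu> (Mt - S)"
      using g by (intro Inf_image_mult_ge[OF pos]) (auto simp: abs_le_iff)
    ultimately show ?thesis using False by simp
  qed
  also have "\<dots> = lower_sum \<mu> g P"
    unfolding lower_sum_def P_def
    by (rule sum.mono_neutral_right) (auto simp: positive_ba_empty[OF pos])
  also have "\<dots> \<le> ba_integral \<mu> g"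
    unfolding ba_integral_lower_sum
    using P bdd_above_lower_sums[OF pos g] by (intro cSup_upper) auto
  finally show ?thesis .
qed

section \<open>The de Leeuw transform and the norm of \<Phi>*\<mu>\<close>

lemma Lip0_ballI:
  assumes "f p = 0" "\<And>x y. \<bar>f x - f y\<bar> \<le> dist x y"
  shows "f \<in> Lip0_ball p"
  using assms unfolding Lip0_ball_def lipschitz_on_def by (simp add: dist_real_def)

lemma Lip0_ball_abs_diff_le: "f \<in> Lip0_ball p \<Longrightarrow> \<bar>f x - f y\<bar> \<le> dist x y"
  unfolding Lip0_ball_def lipschitz_on_def by (auto simp: dist_real_def)

lemma zero_in_Lip0_ball: "(\<lambda>x. 0) \<in> Lip0_ball p"
  by (rule Lip0_ballI) auto

lemma uminus_in_Lip0_ball: "f \<in> Lip0_ball p \<Longrightarrow> (\<lambda>x. - f x) \<in> Lip0_ball p"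
  using Lip0_ball_abs_diff_le by (intro Lip0_ballI) (auto simp: Lip0_ball_def abs_minus_commute)

lemma deLeeuw_uminus: "deLeeuw (\<lambda>x. - f x) z = - deLeeuw f z"
  by (cases z) (simp add: deLeeuw_def minus_divide_left)

text \<open>This holds on the diagonal too, where the de Leeuw transform is 0/0 = 0.\<close>
lemma abs_deLeeuw_le: "f \<in> Lip0_ball p \<Longrightarrow> \<bar>deLeeuw f z\<bar> \<le> 1"
  by (cases z) (auto simp: deLeeuw_def abs_divide Lip0_ball_abs_diff_le divide_le_eq_1)

lemma deLeeuw_eq_1_iff: "deLeeuw f (x, y) = 1 \<longleftrightarrow> x \<noteq> y \<and> f x - f y = dist x y"
  by (auto simp: deLeeuw_def)

lemma abs_ba_integral_deLeeuw_le:
  assumes "positive_ba \<mu>" "f \<in> Lip0_ball p"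
  shows "\<bar>ba_integral \<mu> (deLeeuw f)\<bar> \<le> \<mu> Mt"
proof -
  have g: "\<forall>z\<in>Mt. \<bar>deLeeuw f z\<bar> \<le> 1" using abs_deLeeuw_le[OF assms(2)] by blast
  then have "-1 * \<mu> Mt - \<mu> (Mt - Mt) \<le> ba_integral \<mu> (deLeeuw f)"
    by (intro ba_integral_ge[OF assms(1) g]) (auto simp: abs_le_iff)
  moreover have "ba_integral \<mu> (deLeeuw f) \<le> \<mu> Mt"
    using ba_integral_le[OF assms(1) g, of 0] by simp
  ultimately show ?thesis using positive_ba_empty[OF assms(1)] by (simp add: abs_le_iff)
qed

lemma bdd_above_Phi_star:
  "positive_ba \<mu> \<Longrightarrow> bdd_above {\<bar>ba_integral \<mu> (deLeeuw f)\<bar> | f. f \<in> Lip0_ball p}"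
  using abs_ba_integral_deLeeuw_le by (intro bdd_aboveI[of _ "\<mu> Mt"]) auto

lemma abs_ba_integral_le_Phi_star_norm:
  "positive_ba \<mu> \<Longrightarrow> f \<in> Lip0_ball p \<Longrightarrow> \<bar>ba_integral \<mu> (deLeeuw f)\<bar> \<le> Phi_star_norm p \<mu>"
  unfolding Phi_star_norm_def by (rule cSup_upper) (use bdd_above_Phi_star in auto)

lemma Phi_star_norm_le:
  assumes "positive_ba \<mu>"
  shows "Phi_star_norm p \<mu> \<le> \<mu> Mt"
  unfolding Phi_star_norm_def
proof (rule cSup_least)
  show "{\<bar>ba_integral \<mu> (deLeeuw f)\<bar> | f. f \<in> Lip0_ball p} \<noteq> {}"
    using zero_in_Lip0_ball by blast
qed (use abs_ba_integral_deLeeuw_le[OF assms] in auto)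

lemma Phi_star_norm_ge_norming_set:
  assumes pos: "positive_ba \<mu>" and "B \<subseteq> Mt" "f \<in> Lip0_ball p" "\<forall>z\<in>B. deLeeuw f z = 1"
  shows "2 * \<mu> B - \<mu> Mt \<le> Phi_star_norm p \<mu>"
proof -
  have "1 * \<mu> B - \<mu> (Mt - B) \<le> ba_integral \<mu> (deLeeuw f)"
    using assms abs_deLeeuw_le by (intro ba_integral_ge) auto
  moreover have "\<mu> (Mt - B) = \<mu> Mt - \<mu> B"
    using positive_ba_Diff[OF pos \<open>B \<subseteq> Mt\<close>] by simp
  ultimately show ?thesis
    using abs_ba_integral_le_Phi_star_norm[OF pos \<open>f \<in> Lip0_ball p\<close>] by linarith
qed

lemma Phi_star_norm_eq_if_norming_sets:
  assumes pos: "positive_ba \<mu>"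
    and norming: "\<And>\<gamma>. 0 < \<gamma> \<Longrightarrow> \<gamma> < 1 \<Longrightarrow>
      \<exists>B f. B \<subseteq> Mt \<and> f \<in> Lip0_ball p \<and> \<gamma> * \<mu> Mt \<le> \<mu> B \<and> (\<forall>z\<in>B. deLeeuw f z = 1)"
  shows "Phi_star_norm p \<mu> = \<mu> Mt"
proof (rule antisym[OF Phi_star_norm_le[OF pos]], rule field_le_epsilon)
  fix \<epsilon> :: real assume "0 < \<epsilon>"
  have m: "0 \<le> \<mu> Mt" using positive_ba_nonneg[OF pos] by simp
  define \<gamma> where "\<gamma> = 1 - \<epsilon> / (2 * (\<mu> Mt + \<epsilon>))"
  have "0 < \<gamma>" "\<gamma> < 1" using \<open>0 < \<epsilon>\<close> m by (auto simp: \<gamma>_def field_simps)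
  then obtain B f where "B \<subseteq> Mt" "f \<in> Lip0_ball p" "\<gamma> * \<mu> Mt \<le> \<mu> B" "\<forall>z\<in>B. deLeeuw f z = 1"
    using norming by blast
  then have "2 * (\<gamma> * \<mu> Mt) - \<mu> Mt \<le> Phi_star_norm p \<mu>"
    using Phi_star_norm_ge_norming_set[OF pos] by fastforce
  then have "(2 * \<gamma> - 1) * \<mu> Mt \<le> Phi_star_norm p \<mu>"
    by (simp add: algebra_simps)
  moreover have "\<mu> Mt - \<epsilon> \<le> (2 * \<gamma> - 1) * \<mu> Mt"
    using \<open>0 < \<epsilon>\<close> m by (simp add: \<gamma>_def field_simps)
  ultimately show "\<mu> Mt \<le> Phi_star_norm p \<mu> + \<epsilon>" by linarith
qed

lemma exists_almost_norming:
  assumes pos: "positive_ba \<mu>" and F: "Phi_star_norm p \<mu> = \<mu> Mt"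
    and "0 < \<epsilon>" "0 < \<eta>"
  shows "\<exists>f\<in>Lip0_ball p. \<mu> (Mt - {z\<in>Mt. 1 - \<eta> < deLeeuw f z}) < \<epsilon>"
proof -
  have "\<mu> Mt - \<eta> * \<epsilon> < Phi_star_norm p \<mu>"
    using F \<open>0 < \<epsilon>\<close> \<open>0 < \<eta>\<close> by simp
  then obtain f where f: "f \<in> Lip0_ball p" and I: "\<mu> Mt - \<eta> * \<epsilon> < \<bar>ba_integral \<mu> (deLeeuw f)\<bar>"
    unfolding Phi_star_norm_def
    using less_cSup_iff[OF _ bdd_above_Phi_star[OF pos]] zero_in_Lip0_ball by blast
  have g: "\<forall>z\<in>Mt. \<bar>deLeeuw f z\<bar> \<le> 1" using abs_deLeeuw_le[OF f] by blast
  show ?thesis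
  proof (cases "0 \<le> ba_integral \<mu> (deLeeuw f)")
    case True
    then have "\<eta> * \<mu> (Mt - {z\<in>Mt. 1 - \<eta> < deLeeuw f z}) < \<eta> * \<epsilon>"
      using I ba_integral_le[OF pos g, of \<eta>] \<open>0 < \<eta>\<close> by linarith
    then show ?thesis using f \<open>0 < \<eta>\<close> by (auto simp: mult_less_cancel_left_pos)
  next
    case False
    define S where "S = {z\<in>Mt. -1 + \<eta> \<le> deLeeuw f z}"
    have "S \<subseteq> Mt" by (auto simp: S_def)
    have "(-1 + \<eta>) * \<mu> S - \<mu> (Mt - S) \<le> ba_integral \<mu> (deLeeuw f)"
      by (rule ba_integral_ge[OF pos g \<open>S \<subseteq> Mt\<close>]) (auto simp: S_def)
    moreover have "\<mu> (Mt - S) = \<mu> Mt - \<mu> S"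
      using positive_ba_Diff[OF pos \<open>S \<subseteq> Mt\<close>] by simp
    ultimately have "\<eta> * \<mu> S < \<eta> * \<epsilon>" using I False by (simp add: algebra_simps)
    moreover have "Mt - {z\<in>Mt. 1 - \<eta> < deLeeuw (\<lambda>x. - f x) z} = S"
      by (auto simp: S_def deLeeuw_uminus)
    ultimately show ?thesis using uminus_in_Lip0_ball[OF f] \<open>0 < \<eta>\<close> by auto
  qed
qed

section \<open>Rounding to integer-valued Lipschitz functions\<close>

lemma floor_add_real_of_nat: "\<lfloor>x + real k\<rfloor> = \<lfloor>x\<rfloor> + int k"
  using floor_add_int[of x "int k"] by simp

lemma abs_floor_diff_le:
  fixes a b :: real
  assumes "\<bar>a - b\<bar> \<le> real k"
  shows "\<bar>\<lfloor>a\<rfloor> - \<lfloor>b\<rfloor>\<bar> \<le> int k"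
proof -
  have "\<lfloor>a\<rfloor> \<le> \<lfloor>b + real k\<rfloor>" "\<lfloor>b\<rfloor> \<le> \<lfloor>a + real k\<rfloor>"
    using assms by (auto simp only: abs_le_iff intro!: floor_mono)
  then show ?thesis by (simp add: floor_add_real_of_nat)
qed

lemma less_floor_if_floor_diff_ne:
  fixes a s :: real
  assumes "0 \<le> s" "\<lfloor>a - s + real k\<rfloor> - \<lfloor>a\<rfloor> \<noteq> int k"
  shows "a - s < \<lfloor>a\<rfloor>"
proof (rule ccontr)
  assume "\<not> a - s < \<lfloor>a\<rfloor>"
  then have "\<lfloor>a\<rfloor> \<le> \<lfloor>a - s\<rfloor>" by (simp add: le_floor_iff)
  moreover have "\<lfloor>a - s\<rfloor> \<le> \<lfloor>a\<rfloor>" using \<open>0 \<le> s\<close> by (intro floor_mono) simp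
  ultimately show False using assms(2) by (simp add: floor_add_real_of_nat)
qed

text \<open>The half-open intervals (b + t - s, b + t] and (b + t' - s, b + t'] are disjoint and lie
  in an interval of length at most 1, so they cannot both contain an integer.\<close>
lemma not_both_below_floor:
  fixes b s t t' :: real
  assumes "0 \<le> s" "s \<le> t' - t" "t' - t + s \<le> 1"
    and "b + t - s < \<lfloor>b + t\<rfloor>" "b + t' - s < \<lfloor>b + t'\<rfloor>"
  shows False
proof -
  have "real_of_int \<lfloor>b + t\<rfloor> \<le> b + t" "real_of_int \<lfloor>b + t'\<rfloor> \<le> b + t'"
    by simp_all
  then have "real_of_int \<lfloor>b + t\<rfloor> < real_of_int \<lfloor>b + t'\<rfloor>"
    "real_of_int \<lfloor>b + t'\<rfloor> < real_of_int \<lfloor>b + t\<rfloor> + 1"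
    using assms by linarith+
  then have "\<lfloor>b + t\<rfloor> < \<lfloor>b + t'\<rfloor>" "\<lfloor>b + t'\<rfloor> < \<lfloor>b + t\<rfloor> + 1"
    by linarith+
  then show False by linarith
qed

lemma exists_le_average:
  fixes a :: "nat \<Rightarrow> real"
  assumes "0 < K" "(\<Sum>j<K. a j) \<le> c"
  shows "\<exists>j<K. a j \<le> c / real K"
proof (rule ccontr)
  assume "\<not> ?thesis"
  then have "(\<Sum>j<K. c / real K) < (\<Sum>j<K. a j)"
    using \<open>0 < K\<close> by (intro sum_strict_mono) auto
  then show False using assms by simp
qed

definition rounded :: "('a \<Rightarrow> real) \<Rightarrow> 'a \<Rightarrow> real \<Rightarrow> 'a \<Rightarrow> real" where
  "rounded f p t x = real_of_int \<lfloor>f x + t\<rfloor> - real_of_int \<lfloor>f p + t\<rfloor>"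

lemma rounded_in_Lip0_ball:
  fixes f :: "'a::metric_space \<Rightarrow> real"
  assumes dist_int: "\<forall>x y :: 'a. \<exists>k::nat. dist x y = real k"
    and f: "f \<in> Lip0_ball p"
  shows "rounded f p t \<in> Lip0_ball p"
proof (rule Lip0_ballI)
  fix x y :: 'a
  obtain k where k: "dist x y = real k" using dist_int by blast
  then have "\<bar>(f x + t) - (f y + t)\<bar> \<le> real k"
    using Lip0_ball_abs_diff_le[OF f, of x y] by simp
  then have "\<bar>\<lfloor>f x + t\<rfloor> - \<lfloor>f y + t\<rfloor>\<bar> \<le> int k" by (rule abs_floor_diff_le)
  then have "real_of_int \<bar>\<lfloor>f x + t\<rfloor> - \<lfloor>f y + t\<rfloor>\<bar> \<le> real_of_int (int k)"
    by (rule of_int_le_iff[THEN iffD2])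
  then show "\<bar>rounded f p t x - rounded f p t y\<bar> \<le> dist x y" by (simp add: rounded_def k)
qed (simp add: rounded_def)

lemma below_floor_if_deLeeuw_rounded_ne_1:
  assumes f: "f \<in> Lip0_ball p" and "x \<noteq> y" "dist x y = real k"
    and "deLeeuw (rounded f p t) (x, y) \<noteq> 1"
  shows "f y + t - (dist x y - (f x - f y)) < \<lfloor>f y + t\<rfloor>"
proof -
  define s where "s = dist x y - (f x - f y)"
  have "0 \<le> s" using Lip0_ball_abs_diff_le[OF f, of x y] by (simp add: s_def)
  have "0 < real k" using assms(2,3) by (metis zero_less_dist_iff)
  then have "\<lfloor>f x + t\<rfloor> - \<lfloor>f y + t\<rfloor> \<noteq> int k"
    using assms(3,4) by (auto simp: deLeeuw_def rounded_def)
  moreover have "f x + t = (f y + t) - s + real k" by (simp add: s_def assms(3))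
  ultimately have "\<lfloor>(f y + t) - s + real k\<rfloor> - \<lfloor>f y + t\<rfloor> \<noteq> int k" by metis
  then show ?thesis
    unfolding s_def[symmetric] by (rule less_floor_if_floor_diff_ne[OF \<open>0 \<le> s\<close>])
qed

text \<open>On S the slope deficit s of f is below 1/K, and the rounding at shift t spoils a pair only
  if an integer lies in (f y + t - s, f y + t]; so the K shifts j/K spoil pairwise disjoint sets.\<close>
lemma exists_rounded_deLeeuw_eq_1:
  fixes p :: "'a::metric_space" and \<mu> :: "('a \<times> 'a) set \<Rightarrow> real"
  assumes dist_int: "\<forall>x y :: 'a. \<exists>k::nat. k \<le> n \<and> dist x y = real k"
    and pos: "positive_ba \<mu>" and f: "f \<in> Lip0_ball p"
    and S: "S \<subseteq> Mt" "\<forall>z\<in>S. 1 - \<eta> < deLeeuw f z"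
    and K: "0 < K" "0 \<le> \<eta>" "real n * \<eta> \<le> 1 / real K"
  shows "\<exists>j<K. \<mu> {z\<in>S. deLeeuw (rounded f p (real j / real K)) z \<noteq> 1} \<le> \<mu> S / real K"
proof -
  define D where "D j = {z\<in>S. deLeeuw (rounded f p (real j / real K)) z \<noteq> 1}" for j :: nat
  define s where "s x y = dist x y - (f x - f y)" for x y
  have s: "0 \<le> s x y" "s x y < 1 / real K" if "(x, y) \<in> S" for x y
  proof -
    show "0 \<le> s x y" using Lip0_ball_abs_diff_le[OF f, of x y] by (simp add: s_def)
    obtain k where k: "k \<le> n" "dist x y = real k" using dist_int by blast
    have "x \<noteq> y" using that S(1) by (auto simp: Mt_def)
    then have "0 < real k" using k by (metis zero_less_dist_iff)
    then have "(1 - \<eta>) * real k < f x - f y"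
      using S(2) that k by (auto simp: deLeeuw_def less_divide_eq)
    then have "s x y < \<eta> * real k" by (simp add: s_def k algebra_simps)
    also have "\<dots> \<le> real n * \<eta>"
      using k K(2) by (simp add: mult.commute mult_left_mono)
    finally show "s x y < 1 / real K" using K(3) by linarith
  qed
  have D_below_floor: "f y + real j / real K - s x y < \<lfloor>f y + real j / real K\<rfloor>"
    if "(x, y) \<in> D j" for x y j
  proof -
    obtain k where "dist x y = real k" using dist_int by blast
    moreover have "x \<noteq> y" using that S(1) by (auto simp: D_def Mt_def)
    ultimately show ?thesis
      using that below_floor_if_deLeeuw_rounded_ne_1[OF f] by (auto simp: D_def s_def)
  qed
  have D_disjoint: "D i \<inter> D j = {}" if "i < j" "j < K" for i j
  proof (rule ccontr)
    assume "D i \<inter> D j \<noteq> {}"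
    then obtain x y where xy: "(x, y) \<in> D i" "(x, y) \<in> D j" by auto
    then have "(x, y) \<in> S" by (simp add: D_def)
    have "real i + 1 \<le> real j" "real j + 1 \<le> real K"
      using that by (metis Suc_leI add.commute of_nat_Suc of_nat_le_iff)+
    then have "1 / real K \<le> (real j - real i) / real K"
      "(real j - real i) / real K \<le> (real K - 1) / real K"
      by (simp_all add: divide_right_mono)
    then have "1 / real K \<le> real j / real K - real i / real K"
      "real j / real K - real i / real K \<le> 1 - 1 / real K"
      using K(1) by (simp_all add: diff_divide_distrib)
    then show False
      using not_both_below_floor[OF s(1)[OF \<open>(x, y) \<in> S\<close>] _ _
          D_below_floor[OF xy(1)] D_below_floor[OF xy(2)]]
        s(2)[OF \<open>(x, y) \<in> S\<close>] by linarith
  qed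
  have "D i \<inter> D j = {}" if "i \<noteq> j" "i < K" "j < K" for i j
    using that D_disjoint[of i j] D_disjoint[of j i] by (cases "i < j") auto
  then have "(\<Sum>j<K. \<mu> (D j)) = \<mu> (\<Union>j<K. D j)"
    using S(1) by (intro positive_ba_UN[OF pos, symmetric]) (auto simp: D_def)
  also have "\<dots> \<le> \<mu> S"
    using S(1) by (intro positive_ba_mono[OF pos]) (auto simp: D_def)
  finally show ?thesis
    unfolding D_def[symmetric] by (rule exists_le_average[OF K(1)])
qed

lemma norming_sets_if_Phi_star_norm_eq:
  fixes p :: "'a::metric_space" and \<mu> :: "('a \<times> 'a) set \<Rightarrow> real"
  assumes dist_int: "\<forall>x y :: 'a. \<exists>k::nat. k \<le> n \<and> dist x y = real k"
    and pos: "positive_ba \<mu>" and F: "Phi_star_norm p \<mu> = \<mu> Mt" and "0 < \<gamma>" "\<gamma> < 1"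
  shows "\<exists>B f. B \<subseteq> Mt \<and> f \<in> Lip0_ball p \<and> \<gamma> * \<mu> Mt \<le> \<mu> B \<and> (\<forall>z\<in>B. deLeeuw f z = 1)"
proof (cases "\<mu> Mt = 0")
  case True
  then show ?thesis
    using zero_in_Lip0_ball positive_ba_empty[OF pos] by (intro exI[of _ "{}"]) auto
next
  case False
  then have m: "0 < \<mu> Mt" using positive_ba_nonneg[OF pos, of Mt] by simp
  obtain K :: nat where "0 < K" "inverse (real K) < (1 - \<gamma>) / 2"
    using ex_inverse_of_nat_less[of "(1 - \<gamma>) / 2"] \<open>\<gamma> < 1\<close> by auto
  then have K: "0 < K" "1 / real K \<le> (1 - \<gamma>) / 2" by (simp_all add: inverse_eq_divide)
  define \<eta> where "\<eta> = 1 / (real K * (real n + 1))"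
  have "0 < \<eta>" using K(1) by (simp add: \<eta>_def)
  have "real n * \<eta> \<le> (real n + 1) * \<eta>"
    using \<open>0 < \<eta>\<close> by (intro mult_right_mono) auto
  also have "\<dots> = 1 / real K" by (simp add: \<eta>_def)
  finally have \<eta>: "0 < \<eta>" "real n * \<eta> \<le> 1 / real K" using \<open>0 < \<eta>\<close> by simp_all
  obtain f where f: "f \<in> Lip0_ball p"
    and small: "\<mu> (Mt - {z\<in>Mt. 1 - \<eta> < deLeeuw f z}) < (1 - \<gamma>) * \<mu> Mt / 2"
    using exists_almost_norming[OF pos F _ \<open>0 < \<eta>\<close>, of "(1 - \<gamma>) * \<mu> Mt / 2"] \<open>\<gamma> < 1\<close> m
    by auto
  define S where "S = {z\<in>Mt. 1 - \<eta> < deLeeuw f z}"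
  have S: "S \<subseteq> Mt" "\<forall>z\<in>S. 1 - \<eta> < deLeeuw f z" by (auto simp: S_def)
  obtain j where bad: "\<mu> {z\<in>S. deLeeuw (rounded f p (real j / real K)) z \<noteq> 1} \<le> \<mu> S / real K"
    using exists_rounded_deLeeuw_eq_1[OF dist_int pos f S K(1) less_imp_le[OF \<eta>(1)] \<eta>(2)] by blast
  define g where "g = rounded f p (real j / real K)"
  have g: "g \<in> Lip0_ball p"
    unfolding g_def using dist_int by (intro rounded_in_Lip0_ball[OF _ f]) blast
  define B where "B = {z\<in>S. deLeeuw g z = 1}"
  have "B = S - {z\<in>S. deLeeuw g z \<noteq> 1}" by (auto simp: B_def)
  then have "\<mu> B = \<mu> S - \<mu> {z\<in>S. deLeeuw g z \<noteq> 1}"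
    using positive_ba_Diff[OF pos _ S(1), of "{z\<in>S. deLeeuw g z \<noteq> 1}"] by auto
  moreover have "\<mu> (Mt - S) = \<mu> Mt - \<mu> S"
    using positive_ba_Diff[OF pos S(1) subset_refl] by simp
  moreover have "\<mu> S / real K \<le> \<mu> Mt * ((1 - \<gamma>) / 2)"
  proof -
    have "\<mu> S * (1 / real K) \<le> \<mu> Mt * ((1 - \<gamma>) / 2)"
      using K(2) positive_ba_mono[OF pos S(1) subset_refl] m by (intro mult_mono) auto
    then show ?thesis by simp
  qed
  moreover have "\<gamma> * \<mu> Mt = \<mu> Mt - (1 - \<gamma>) * \<mu> Mt / 2 - \<mu> Mt * ((1 - \<gamma>) / 2)"
    by (simp add: algebra_simps)
  ultimately have "\<gamma> * \<mu> Mt \<le> \<mu> B"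
    using small[folded S_def] bad[folded g_def] by linarith
  moreover have "B \<subseteq> Mt" using S(1) by (auto simp: B_def)
  ultimately show ?thesis using g by (auto simp: B_def)
qed

section \<open>Cyclic monotonicity\<close>

lemma sum_lessThan_rotate:
  "(\<Sum>i<L. h (Suc i mod L)) = (\<Sum>i<L::nat. h i :: 'b::comm_monoid_add)"
proof (cases L)
  case (Suc m)
  have "(\<Sum>i<Suc m. h ((i + 1) mod Suc m)) = (\<Sum>i<m. h (Suc i)) + h 0"
    by (simp add: sum.lessThan_Suc)
  also have "\<dots> = (\<Sum>i<Suc m. h i)"
    by (simp only: sum.lessThan_Suc_shift add.commute)
  finally show ?thesis using Suc by simp
qed simp

lemma cyclically_monotonic_if_deLeeuw_eq_1:
  assumes f: "f \<in> Lip0_ball p" and B: "\<forall>z\<in>B. deLeeuw f z = 1"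
  shows "cyclically_monotonic B"
  unfolding cyclically_monotonic_def
proof (intro allI impI)
  fix ps assume ps: "set ps \<subseteq> B"
  let ?L = "length ps" and ?x = "\<lambda>i. fst (ps ! i)" and ?y = "\<lambda>i. snd (ps ! i)"
  have "dist (?x i) (?y i) = f (?x i) - f (?y i)" if "i < ?L" for i
    using ps that B deLeeuw_eq_1_iff[of f "?x i" "?y i"] by (metis nth_mem prod.collapse subsetD)
  then have "(\<Sum>i<?L. dist (?x i) (?y i)) = (\<Sum>i<?L. f (?x i)) - (\<Sum>i<?L. f (?y i))"
    by (simp add: sum_subtractf)
  also have "\<dots> = (\<Sum>i<?L. f (?x i) - f (?y ((i + 1) mod ?L)))"
    using sum_lessThan_rotate[of "\<lambda>i. f (?y i)" ?L] by (simp add: sum_subtractf)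
  also have "\<dots> \<le> (\<Sum>i<?L. dist (?x i) (?y ((i + 1) mod ?L)))"
    using Lip0_ball_abs_diff_le[OF f] by (intro sum_mono) (simp add: abs_le_iff)
  finally show "(\<Sum>i<?L. dist (?x i) (?y i)) \<le> (\<Sum>i<?L. dist (?x i) (?y ((i + 1) mod ?L)))" .
qed

text \<open>Rockafellar's construction of a potential minimises this sum over the chains in B.\<close>
fun chain_sum :: "'a::metric_space \<Rightarrow> 'a \<Rightarrow> ('a \<times> 'a) list \<Rightarrow> real" where
  "chain_sum r z [] = dist z r"
| "chain_sum r z ((x, y) # ps) = dist z y - dist x y + chain_sum r x ps"

lemma chain_sum_le: "chain_sum r z ps \<le> chain_sum r z' ps + dist z z'"
proof (cases ps)
  case Nil
  then show ?thesis using dist_triangle[of z r z'] by simp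
next
  case (Cons q qs)
  then show ?thesis using dist_triangle[of z "snd q" z'] by (cases q) simp
qed

lemma chain_sum_eq_nth:
  "chain_sum r z ps + (\<Sum>i<length ps. dist (fst (ps ! i)) (snd (ps ! i)))
     = dist z (snd ((ps @ [(r, r)]) ! 0))
       + (\<Sum>i<length ps. dist (fst (ps ! i)) (snd ((ps @ [(r, r)]) ! Suc i)))"
proof (induction ps arbitrary: z)
  case (Cons q ps)
  obtain x y where q: "q = (x, y)" by fastforce
  show ?case
    using Cons.IH[of x] by (simp add: q sum.lessThan_Suc_shift del: sum.lessThan_Suc)
qed simp

lemma chain_sum_ge_if_cyclically_monotonic:
  assumes cm: "cyclically_monotonic B" and "(x0, y0) \<in> B" "set ps \<subseteq> B"
  shows "dist x0 y0 \<le> chain_sum y0 x0 ps"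
proof -
  define qs where "qs = (x0, y0) # ps"
  let ?ys = "ps @ [(y0, y0)]"
  have "set qs \<subseteq> B" using assms by (simp add: qs_def)
  then have cyc: "(\<Sum>i<length qs. dist (fst (qs ! i)) (snd (qs ! i)))
      \<le> (\<Sum>i<length qs. dist (fst (qs ! i)) (snd (qs ! ((i + 1) mod length qs))))"
    using cm unfolding cyclically_monotonic_def by blast
  have "snd (qs ! ((i + 1) mod length qs)) = snd (?ys ! i)" if "i < length qs" for i
  proof (cases "i < length ps")
    case True
    then have "(i + 1) mod length qs = Suc i" by (simp add: qs_def)
    then show ?thesis using True by (simp add: qs_def nth_append)
  next
    case False
    then have "i + 1 = length qs" using that by (simp add: qs_def)
    then show ?thesis using False by (simp add: qs_def nth_append)
  qed
  then have "(\<Sum>i<length qs. dist (fst (qs ! i)) (snd (qs ! ((i + 1) mod length qs))))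
      = (\<Sum>i<length qs. dist (fst (qs ! i)) (snd (?ys ! i)))"
    by (intro sum.cong) auto
  also have "\<dots> = dist x0 (snd (?ys ! 0)) + (\<Sum>i<length ps. dist (fst (ps ! i)) (snd (?ys ! Suc i)))"
    by (simp add: qs_def sum.lessThan_Suc_shift del: sum.lessThan_Suc)
  also have "\<dots> = chain_sum y0 x0 ps + (\<Sum>i<length ps. dist (fst (ps ! i)) (snd (ps ! i)))"
    by (rule chain_sum_eq_nth[symmetric])
  finally show ?thesis
    using cyc by (simp add: qs_def sum.lessThan_Suc_shift del: sum.lessThan_Suc)
qed

definition chain_potential :: "('a::metric_space \<times> 'a) set \<Rightarrow> 'a \<Rightarrow> 'a \<Rightarrow> real" where
  "chain_potential B r z = (INF ps\<in>lists B. chain_sum r z ps)"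

context
  fixes B :: "('a::metric_space \<times> 'a) set" and x0 r :: 'a
  assumes cm: "cyclically_monotonic B" and base: "(x0, r) \<in> B"
begin

lemma bdd_below_chain_sums: "bdd_below ((\<lambda>ps. chain_sum r z ps) ` lists B)"
proof (rule bdd_belowI2)
  fix ps assume "ps \<in> lists B"
  then have "dist x0 r \<le> chain_sum r x0 ps"
    using chain_sum_ge_if_cyclically_monotonic[OF cm base] by auto
  then show "dist x0 r - dist x0 z \<le> chain_sum r z ps"
    using chain_sum_le[of r x0 ps z] by simp
qed

lemma chain_potential_le: "ps \<in> lists B \<Longrightarrow> chain_potential B r z \<le> chain_sum r z ps"
  unfolding chain_potential_def using bdd_below_chain_sums by (rule cINF_lower)

lemma chain_potential_lipschitz: "chain_potential B r z \<le> chain_potential B r z' + dist z z'"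
proof -
  have "chain_potential B r z - dist z z' \<le> chain_potential B r z'"
    unfolding chain_potential_def[of B r z']
  proof (rule cINF_greatest)
    fix ps assume "ps \<in> lists B"
    then have "chain_potential B r z \<le> chain_sum r z ps" by (rule chain_potential_le)
    then show "chain_potential B r z - dist z z' \<le> chain_sum r z' ps"
      using chain_sum_le[of r z ps z'] by simp
  qed (metis empty_iff lists.Nil)
  then show ?thesis by simp
qed

lemma chain_potential_step:
  assumes "(x, y) \<in> B"
  shows "chain_potential B r y + dist x y \<le> chain_potential B r x"
  unfolding chain_potential_def[of B r x]
proof (rule cINF_greatest)
  fix ps assume "ps \<in> lists B"
  then have "chain_potential B r y \<le> chain_sum r y ((x, y) # ps)"
    using assms by (intro chain_potential_le) auto
  then show "chain_potential B r y + dist x y \<le> chain_sum r x ps" by simp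
qed (metis empty_iff lists.Nil)

end

lemma exists_deLeeuw_eq_1_if_cyclically_monotonic:
  fixes B :: "('a::metric_space \<times> 'a) set"
  assumes B: "B \<subseteq> Mt" and cm: "cyclically_monotonic B"
  shows "\<exists>f\<in>Lip0_ball p. \<forall>z\<in>B. deLeeuw f z = 1"
proof (cases "B = {}")
  case True
  then show ?thesis using zero_in_Lip0_ball by blast
next
  case False
  then obtain x0 r where base: "(x0, r) \<in> B" by auto
  define f where "f z = chain_potential B r z - chain_potential B r p" for z
  note lip = chain_potential_lipschitz[OF cm base]
  have "f \<in> Lip0_ball p"
  proof (rule Lip0_ballI)
    fix x y :: 'a
    show "\<bar>f x - f y\<bar> \<le> dist x y"
      using lip[of x y] lip[of y x] by (simp add: f_def abs_le_iff dist_commute)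
  qed (simp add: f_def)
  moreover have "deLeeuw f (x, y) = 1" if "(x, y) \<in> B" for x y
  proof -
    have "x \<noteq> y" using that B by (auto simp: Mt_def)
    moreover have "f x - f y = dist x y"
      using lip[of x y] chain_potential_step[OF cm base that] by (simp add: f_def)
    ultimately show ?thesis by (simp add: deLeeuw_eq_1_iff)
  qed
  ultimately show ?thesis by (metis prod.collapse)
qed

theorem proposition2p8:
  fixes p :: "'a::metric_space" and n :: nat
    and \<mu> :: "('a \<times> 'a) set \<Rightarrow> real"
  assumes dist_int: "\<forall>x y :: 'a. \<exists>k::nat. k \<le> n \<and> dist x y = real k"
    and pos: "positive_ba \<mu>"
  shows "(Phi_star_norm p \<mu> = ba_norm \<mu>
          \<longleftrightarrow> (\<forall>\<gamma>. 0 < \<gamma> \<and> \<gamma> < 1 \<longrightarrow>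
                 (\<exists>B f. B \<subseteq> Mt \<and> f \<in> Lip0_ball p \<and> \<mu> B \<ge> \<gamma> * \<mu> Mt
                        \<and> (\<forall>xy\<in>B. deLeeuw f xy = 1))))
      \<and> (Phi_star_norm p \<mu> = ba_norm \<mu>
          \<longleftrightarrow> (\<forall>\<gamma>. 0 < \<gamma> \<and> \<gamma> < 1 \<longrightarrow>
                 (\<exists>B. B \<subseteq> Mt \<and> cyclically_monotonic B \<and> \<mu> B \<ge> \<gamma> * \<mu> Mt)))"
proof -
  let ?ii = "\<lambda>\<gamma>. \<exists>B f. B \<subseteq> Mt \<and> f \<in> Lip0_ball p \<and> \<mu> B \<ge> \<gamma> * \<mu> Mt \<and> (\<forall>xy\<in>B. deLeeuw f xy = 1)"
  let ?iii = "\<lambda>\<gamma>. \<exists>B. B \<subseteq> Mt \<and> cyclically_monotonic B \<and> \<mu> B \<ge> \<gamma> * \<mu> Mt"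
  have "Phi_star_norm p \<mu> = ba_norm \<mu> \<longleftrightarrow> (\<forall>\<gamma>. 0 < \<gamma> \<and> \<gamma> < 1 \<longrightarrow> ?ii \<gamma>)"
    unfolding ba_norm_positive_ba[OF pos]
    using norming_sets_if_Phi_star_norm_eq[OF dist_int pos] Phi_star_norm_eq_if_norming_sets[OF pos]
    by auto
  moreover have "?ii \<gamma> \<longleftrightarrow> ?iii \<gamma>" for \<gamma>
  proof
    assume "?ii \<gamma>"
    then show "?iii \<gamma>" using cyclically_monotonic_if_deLeeuw_eq_1 by blast
  next
    assume "?iii \<gamma>"
    then show "?ii \<gamma>" using exists_deLeeuw_eq_1_if_cyclically_monotonic by blast
  qed
  ultimately show ?thesis by simp
qed

end
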